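(* Let $n \ge 3$ be odd, let $f \in S_{1,1}(n)$ and let $g \in S_{0,0}(n)$. Then: (i) $\psi(f) \in S_{0,0}(n)$ if $\sigma_f = 1$, and $\psi(f) \in S_{0,1}(n)$ if $\sigma_f = 0$; (ii) $\psi^{-1}(f) \in S_{0,0}(n)$ if $\sigma_f = 0$, and $\psi^{-1}(f) \in S_{1,0}(n)$ if $\sigma_f = 1$; (iii) $\psi(g) \in S_{1,1}(n)$ if $\sigma_g = 1$, and $\psi(g) \in S_{1,0}(n)$ if $\sigma_g = 0$; (iv) $\psi^{-1}(g) \in S_{1,1}(n)$ if $\sigma_g = 0$, and $\psi^{-1}(g) \in S_{0,1}(n)$ if $\sigma_g = 1$.
   Context: For $n \ge 2$, let $\mathcal{I}_n$ be the set of all irreducible polynomials of degree $n$ in $\mathbb{F}_2[x]$. Every $f \in \mathcal{I}_n$ is monic with constant term $1$; write $f = x^n + f_{n-1}x^{n-1} + \cdots + f_1 x + 1$ with $f_k \in \mathbb{F}_2$. For $i,j \in \mathbb{F}_2$, $S_{i,j}(n)$ denotes the set of $f \in \mathcal{I}_n$ with $f_{n-1} = i$ and $f_1 = j$. Define $\psi : \mathcal{I}_n \to \mathcal{I}_n$ by $\psi(f)(x) = (x+1)^n f\!\left(\frac{1}{x+1}\right)$, with inverse $\psi^{-1}(f)(x) = x^n f\!\left(\frac{x+1}{x}\right)$. The signature of $f \in \mathcal{I}_n$ is $\sigma_f = \sum_{k=2}^{n-2} k f_k \pmod 2 \in \mathbb{F}_2$. *)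

theory Defs
  imports "HOL-Computational_Algebra.Polynomial" "HOL-Computational_Algebra.Polynomial_Factorial" "HOL-Library.Z2"
begin

definition Irr :: "nat \<Rightarrow> bit poly set" where
  "Irr n = {f. degree f = n \<and> lead_coeff f = 1 \<and> irreducible f}"

definition S :: "bit \<Rightarrow> bit \<Rightarrow> nat \<Rightarrow> bit poly set" where
  "S i j n = {f \<in> Irr n. coeff f (n - 1) = i \<and> coeff f 1 = j}"

text \<open>psi(f)(x) = (x+1)^n f(1/(x+1)) = sum_k f_k (x+1)^(n-k)\<close>
definition psi :: "nat \<Rightarrow> bit poly \<Rightarrow> bit poly" where
  "psi n f = (\<Sum>k\<le>n. smult (coeff f k) ([:1, 1:] ^ (n - k)))"

text \<open>psi^{-1}(f)(x) = x^n f((x+1)/x) = sum_k f_k (x+1)^k x^(n-k)\<close>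
definition psi_inv :: "nat \<Rightarrow> bit poly \<Rightarrow> bit poly" where
  "psi_inv n f = (\<Sum>k\<le>n. smult (coeff f k) ([:1, 1:] ^ k * [:0, 1:] ^ (n - k)))"

definition sigma :: "nat \<Rightarrow> bit poly \<Rightarrow> bit" where
  "sigma n f = (\<Sum>k=2..n-2. of_nat k * coeff f k)"

end

theory Submission imports Defs begin

text \<open>Over F_2 both maps are built from two involutions that preserve irreducibility: the
substitution x \<mapsto> x + 1 and the reflection p \<mapsto> x^(deg p) p(1/x) of polynomials with
non-zero constant term. Indeed psi f is the reflection of f composed with x + 1 and psi^-1 f is the
reflection of f(x + 1), so both are again irreducible of degree n. Their coefficients at x^(n-1)
and x are the binomial sums sum_k f_k binom(n-k, j) and sum_k f_k binom(k, n-j). Reduced modulo 2,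
using that n is odd and that f_0 = f_n = f(1) = 1, they equal 1 + f_1, f_1 + sigma_f,
f_1 + sigma_f + 1 and f_(n-1) + 1; the four claims follow by inserting the values of f_1 and
f_(n-1).\<close>

lemma of_nat_bit_eq: "(of_nat m :: bit) = (if even m then 0 else 1)"
  by (induction m) auto

lemma binomial_pred_self: "1 \<le> n \<Longrightarrow> n choose (n - 1) = n"
  by (subst binomial_symmetric) auto

lemma coeff_x_plus_1_power:
  "coeff ([:1, 1:] ^ m) j = (of_nat (m choose j) :: 'a::comm_semiring_1)"
proof (cases "j \<le> m")
  case True
  then show ?thesis by (simp add: coeff_linear_poly_power)
next
  case False
  have "degree ([:1, 1 :: 'a:] ^ m) \<le> m"
    using degree_power_le[of "[:1, 1 :: 'a:]" m] by simp
  with False show ?thesis by (simp add: coeff_eq_0 binomial_eq_0)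
qed

lemma pcompose_monom: "pcompose (monom c m) q = smult c (q ^ m)"
  for q :: "'a::comm_semiring_1 poly"
  by (induction m) (simp_all add: monom_0 monom_Suc pcompose_pCons)

lemma pcompose_eq_sum_powers:
  fixes p q :: "'a::comm_semiring_1 poly"
  assumes "degree p \<le> n"
  shows "pcompose p q = (\<Sum>k\<le>n. smult (coeff p k) (q ^ k))"
proof -
  have "pcompose p q = pcompose (\<Sum>k\<le>n. monom (coeff p k) k) q"
    using poly_as_sum_of_monoms'[OF assms] by simp
  then show ?thesis by (simp add: pcompose_sum pcompose_monom)
qed

lemma irreducible_pcompose_involution:
  fixes p s :: "'a::comm_semiring_1 poly"
  assumes self_inverse: "pcompose s s = [:0, 1:]" and irr: "irreducible p"
  shows "irreducible (pcompose p s)"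
proof -
  have twice: "pcompose (pcompose r s) s = r" for r
    by (simp add: pcompose_assoc[symmetric] self_inverse)
  have unit: "pcompose a s dvd 1" if "a dvd 1" for a
  proof -
    from that obtain c where "1 = a * c" by (elim dvdE)
    then have "1 = pcompose a s * pcompose c s"
      by (metis pcompose_1 pcompose_mult)
    then show ?thesis by (rule dvdI)
  qed
  show ?thesis
  proof (rule irreducibleI)
    show "pcompose p s \<noteq> 0"
      using twice[of p] irr by (metis not_irreducible_zero pcompose_0)
    show "\<not> pcompose p s dvd 1"
    proof
      assume "pcompose p s dvd 1"
      then have "p dvd 1"
        using unit[of "pcompose p s"] twice[of p] by simp
      with irr show False
        by (simp add: irreducible_not_unit)
    qed
  next
    fix a b assume "pcompose p s = a * b"
    then have "p = pcompose a s * pcompose b s"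
      by (metis twice pcompose_mult)
    then have "pcompose a s dvd 1 \<or> pcompose b s dvd 1"
      by (rule irreducibleD[OF irr])
    then show "a dvd 1 \<or> b dvd 1"
      using unit[of "pcompose a s"] unit[of "pcompose b s"] twice by auto
  qed
qed

lemma irreducible_reflect_poly:
  fixes p :: "'a::field poly"
  assumes irr: "irreducible p" and "coeff p 0 \<noteq> 0"
  shows "irreducible (reflect_poly p)"
proof -
  have unit: "is_unit (reflect_poly a)" if "is_unit a" for a :: "'a poly"
    using that by (auto simp: is_unit_poly_iff)
  show ?thesis
  proof (rule irreducibleI)
    show "reflect_poly p \<noteq> 0"
      using irr by auto
    show "\<not> is_unit (reflect_poly p)"
    proof
      assume "is_unit (reflect_poly p)"
      then have "is_unit p"
        using unit[of "reflect_poly p"] assms(2) by simp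
      with irr show False
        by (simp add: irreducible_not_unit)
    qed
  next
    fix a b assume ab: "reflect_poly p = a * b"
    have "coeff a 0 * coeff b 0 = lead_coeff p"
      using arg_cong[OF ab, of "\<lambda>r. coeff r 0"] by (simp add: coeff_mult_0)
    then have "coeff a 0 * coeff b 0 \<noteq> 0"
      using irr by auto
    then have "coeff a 0 \<noteq> 0" and "coeff b 0 \<noteq> 0"
      by auto
    moreover have "p = reflect_poly a * reflect_poly b"
      using arg_cong[OF ab, of reflect_poly] assms by (simp add: reflect_poly_mult)
    then have "is_unit (reflect_poly a) \<or> is_unit (reflect_poly b)"
      by (rule irreducibleD[OF irr])
    ultimately show "is_unit a \<or> is_unit b"
      using unit[of "reflect_poly a"] unit[of "reflect_poly b"] by auto
  qed
qed

text \<open>The reciprocal x^n p(1/x) taken with respect to a formal degree n \<ge> degree p.\<close>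

definition reversal :: "nat \<Rightarrow> 'a::comm_monoid_add poly \<Rightarrow> 'a poly" where
  "reversal n p = (\<Sum>k\<le>n. monom (coeff p k) (n - k))"

lemma coeff_reversal: "coeff (reversal n p) i = (if i \<le> n then coeff p (n - i) else 0)"
proof -
  have "coeff (reversal n p) i = (\<Sum>k\<le>n. if k = n - i \<and> i \<le> n then coeff p k else 0)"
    unfolding reversal_def coeff_sum coeff_monom by (rule sum.cong) auto
  then show ?thesis by simp
qed

lemma reversal_sum: "reversal n (\<Sum>k\<in>A. p k) = (\<Sum>k\<in>A. reversal n (p k))"
  by (rule poly_eqI) (simp add: coeff_reversal coeff_sum)

lemma reversal_smult: "reversal n (smult c p) = smult c (reversal n p)"
  for p :: "'a::comm_semiring_0 poly"
  by (rule poly_eqI) (simp add: coeff_reversal)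

lemma reversal_eq_reflect_poly:
  fixes p :: "'a::comm_semiring_1 poly"
  assumes "degree p \<le> n"
  shows "reversal n p = monom 1 (n - degree p) * reflect_poly p"
  by (rule poly_eqI)
    (use assms in \<open>auto simp: coeff_reversal coeff_monom_mult coeff_reflect_poly coeff_eq_0\<close>)

text \<open>Rewriting bit arithmetic into xor and conjunction defeats the parity arguments below.\<close>

declare add_bit_eq_xor [simp del] mult_bit_eq_and [simp del]

lemma pcompose_x_plus_1_self: "pcompose [:1, 1:] [:1, 1:] = [:0, 1 :: bit:]"
  by (simp add: pcompose_pCons)

lemma psi_eq_pcompose_reversal: "psi n f = pcompose (reversal n f) [:1, 1:]"
  by (simp add: psi_def reversal_def pcompose_sum pcompose_monom)

lemma psi_inv_eq_reversal_pcompose: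
  assumes "degree f \<le> n"
  shows "psi_inv n f = reversal n (pcompose f [:1, 1:])"
proof -
  have "reversal n ([:1, 1:] ^ k) = [:1, 1:] ^ k * [:0, 1 :: bit:] ^ (n - k)" if "k \<le> n" for k
    using reversal_eq_reflect_poly[of "[:1, 1 :: bit:] ^ k" n] that
    by (simp add: degree_power_eq reflect_poly_power reflect_poly_pCons' monom_altdef mult.commute)
  then show ?thesis
    using assms by (simp add: psi_inv_def pcompose_eq_sum_powers reversal_sum reversal_smult)
qed

lemma coeff_psi: "coeff (psi n f) j = (\<Sum>k\<le>n. coeff f k * of_nat ((n - k) choose j))"
  by (simp add: psi_def coeff_sum coeff_x_plus_1_power)

lemma coeff_psi_inv:
  assumes "degree f \<le> n" and "j \<le> n"
  shows "coeff (psi_inv n f) j = (\<Sum>k\<le>n. coeff f k * of_nat (k choose (n - j)))"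
  using assms
  by (simp add: psi_inv_eq_reversal_pcompose coeff_reversal pcompose_eq_sum_powers coeff_sum
      coeff_x_plus_1_power)

lemma Irr_iff: "p \<in> Irr n \<longleftrightarrow> degree p = n \<and> irreducible p"
proof -
  have "lead_coeff p = 1" if "irreducible p"
    using that by (metis bit_not_zero_iff leading_coeff_0_iff not_irreducible_zero)
  then show ?thesis
    by (auto simp: Irr_def)
qed

locale odd_irreducible =
  fixes n :: nat and h :: "bit poly"
  assumes n_ge_3: "3 \<le> n" and odd_n: "odd n" and h_Irr: "h \<in> Irr n"
begin

lemma degree_h: "degree h = n" and irreducible_h: "irreducible h"
  using h_Irr by (simp_all add: Irr_iff)

lemma coeff_h_top: "coeff h n = 1"
  using h_Irr by (auto simp: Irr_def)

lemma poly_h_eq_1: "poly h c = 1"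
proof -
  have "\<not> poly h c = 0"
  proof
    assume "poly h c = 0"
    then have "\<not> irreducible h"
      using degree_h n_ge_3 by (intro root_imp_reducible_poly) auto
    with irreducible_h show False
      by contradiction
  qed
  then show ?thesis
    by simp
qed

lemma coeff_h_0: "coeff h 0 = 1"
  using poly_h_eq_1[of 0] by (simp add: poly_0_coeff_0)

lemma sum_coeffs: "(\<Sum>k\<le>n. coeff h k) = 1"
  using poly_h_eq_1[of 1] by (simp add: poly_altdef degree_h)

lemma weighted_sum_coeffs: "(\<Sum>k\<le>n. of_nat k * coeff h k) = coeff h 1 + sigma n h + 1"
proof -
  let ?g = "\<lambda>k. (of_nat k :: bit) * coeff h k"
  have split: "{..n} = {0, 1} \<union> {2..n - 2} \<union> {n - 1, n}"
    using n_ge_3 by auto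
  have "(\<Sum>k\<le>n. ?g k) = sum ?g ({0, 1} \<union> {2..n - 2}) + sum ?g {n - 1, n}"
    unfolding split by (rule sum.union_disjoint) (use n_ge_3 in auto)
  also have "\<dots> = sum ?g {0, 1} + sum ?g {2..n - 2} + sum ?g {n - 1, n}"
    by (subst sum.union_disjoint) auto
  also have "\<dots> = coeff h 1 + sigma n h + 1"
    using n_ge_3 odd_n by (simp add: sigma_def of_nat_bit_eq coeff_h_top)
  finally show ?thesis .
qed

lemma psi_eq_pcompose_reflect: "psi n h = pcompose (reflect_poly h) [:1, 1:]"
  using reversal_eq_reflect_poly[of h n] by (simp add: psi_eq_pcompose_reversal degree_h)

lemma psi_inv_eq_reflect_pcompose: "psi_inv n h = reflect_poly (pcompose h [:1, 1:])"
  using reversal_eq_reflect_poly[of "pcompose h [:1, 1:]" n]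
  by (simp add: psi_inv_eq_reversal_pcompose degree_h degree_pcompose)

lemma psi_Irr: "psi n h \<in> Irr n"
  using irreducible_pcompose_involution[OF pcompose_x_plus_1_self
      irreducible_reflect_poly[OF irreducible_h]]
  by (simp add: Irr_iff psi_eq_pcompose_reflect degree_pcompose degree_h coeff_h_0)

lemma psi_inv_Irr: "psi_inv n h \<in> Irr n"
proof -
  have "coeff (pcompose h [:1, 1:]) 0 \<noteq> 0"
    using poly_h_eq_1[of 1] by simp
  then show ?thesis
    using irreducible_reflect_poly[OF irreducible_pcompose_involution[OF pcompose_x_plus_1_self
          irreducible_h]]
    by (simp add: Irr_iff psi_inv_eq_reflect_pcompose degree_pcompose degree_h)
qed

lemma coeff_psi_pred: "coeff (psi n h) (n - 1) = 1 + coeff h 1"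
proof -
  have "coeff h k * of_nat ((n - k) choose (n - 1))
      = (if k = 0 then 1 else 0) + (if k = 1 then coeff h 1 else 0)" for k
  proof (cases "k = 0")
    case True
    then show ?thesis
      using binomial_pred_self[of n] n_ge_3 odd_n coeff_h_0 by (simp add: of_nat_bit_eq)
  qed (use n_ge_3 in \<open>auto simp: binomial_eq_0\<close>)
  then show ?thesis
    using n_ge_3 by (simp add: coeff_psi sum.distrib)
qed

lemma coeff_psi_1: "coeff (psi n h) 1 = coeff h 1 + sigma n h"
proof -
  have "coeff h k * of_nat ((n - k) choose 1) = coeff h k + of_nat k * coeff h k" if "k \<le> n" for k
  proof -
    have "even (n - k) \<longleftrightarrow> odd k"
      using that odd_n by auto
    then show ?thesis
      by (cases "coeff h k") (auto simp: of_nat_bit_eq)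
  qed
  then have "coeff (psi n h) 1 = 1 + (coeff h 1 + sigma n h + 1)"
    by (simp add: coeff_psi sum.distrib sum_coeffs weighted_sum_coeffs)
  then show ?thesis
    by (cases "coeff h 1"; cases "sigma n h") simp_all
qed

lemma coeff_psi_inv_pred: "coeff (psi_inv n h) (n - 1) = coeff h 1 + sigma n h + 1"
  using n_ge_3 weighted_sum_coeffs
  by (simp add: coeff_psi_inv degree_h mult.commute)

lemma coeff_psi_inv_1: "coeff (psi_inv n h) 1 = coeff h (n - 1) + 1"
proof -
  have "coeff h k * of_nat (k choose (n - 1))
      = (if k = n - 1 then coeff h (n - 1) else 0) + (if k = n then 1 else 0)" if "k \<le> n" for k
  proof (cases "k = n")
    case True
    then show ?thesis
      using binomial_pred_self[of n] n_ge_3 odd_n coeff_h_top by (simp add: of_nat_bit_eq)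
  qed (use that n_ge_3 in \<open>auto simp: binomial_eq_0\<close>)
  then show ?thesis
    using n_ge_3 by (simp add: coeff_psi_inv degree_h sum.distrib)
qed

lemma psi_in_S: "psi n h \<in> S (1 + coeff h 1) (coeff h 1 + sigma n h) n"
  using psi_Irr coeff_psi_pred coeff_psi_1 by (simp add: S_def)

lemma psi_inv_in_S: "psi_inv n h \<in> S (coeff h 1 + sigma n h + 1) (coeff h (n - 1) + 1) n"
  using psi_inv_Irr coeff_psi_inv_pred coeff_psi_inv_1 by (simp add: S_def)

end

theorem lemma1:
  fixes n :: nat and f g :: "bit poly"
  assumes "n \<ge> 3" and "odd n" and "f \<in> S 1 1 n" and "g \<in> S 0 0 n"
  shows "(sigma n f = 1 \<longrightarrow> psi n f \<in> S 0 0 n) \<and> (sigma n f = 0 \<longrightarrow> psi n f \<in> S 0 1 n)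
       \<and> (sigma n f = 0 \<longrightarrow> psi_inv n f \<in> S 0 0 n) \<and> (sigma n f = 1 \<longrightarrow> psi_inv n f \<in> S 1 0 n)
       \<and> (sigma n g = 1 \<longrightarrow> psi n g \<in> S 1 1 n) \<and> (sigma n g = 0 \<longrightarrow> psi n g \<in> S 1 0 n)
       \<and> (sigma n g = 0 \<longrightarrow> psi_inv n g \<in> S 1 1 n) \<and> (sigma n g = 1 \<longrightarrow> psi_inv n g \<in> S 0 1 n)"
proof -
  interpret f: odd_irreducible n f
    using assms by unfold_locales (simp_all add: S_def)
  interpret g: odd_irreducible n g
    using assms by unfold_locales (simp_all add: S_def)
  have "coeff f (n - 1) = 1" "coeff f 1 = 1" "coeff g (n - 1) = 0" "coeff g 1 = 0"
    using assms(3,4) by (simp_all add: S_def)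
  then show ?thesis
    using f.psi_in_S f.psi_inv_in_S g.psi_in_S g.psi_inv_in_S
    by (cases "sigma n f"; cases "sigma n g") simp_all
qed

end
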